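(* Let $m\ge 1$, $M=2^m$, and let $P_{C_0}(0),\ldots,P_{C_{m-1}}(0)\in(0,1)$ be given, with $P_{C_k}(1)=1-P_{C_k}(0)$. Then for all $j,l\in\{0,\ldots,M-1\}$, $$\sum_{i=0}^{M-1}\gamma_{i,l}\gamma_{i,j}=\begin{cases}M,& j=l,\\ 0,& j\neq l,\end{cases}\qquad\text{and}\qquad \sum_{i=0}^{M-1}h_{l,i}\gamma_{i,j}=M\,h_{j,l}\sqrt{P_{j\oplus l}}.$$
   Context: For an integer $0\le i\le M-1$, $n_{i,k}\in\{0,1\}$ denotes the $k$-th bit of its base-2 representation, i.e. $i=\sum_{k=0}^{m-1}n_{i,k}2^k$; for a bit $b$, $\bar b=1-b$. For integers $i,j$, $i\oplus j$ denotes their bitwise exclusive-or. The symbol probabilities are $P_i=\prod_{k=0}^{m-1}P_{C_k}(n_{i,k})$. The Hadamard coefficients are $h_{i,j}=\prod_{k=0}^{m-1}(-1)^{n_{i,k}n_{j,k}}$. The coefficients $\gamma_{i,j}$ are defined by $$\gamma_{i,j}=\prod_{k=0}^{m-1}\Big[(-1)^{\bar n_{i,k}n_{j,k}}\sqrt{P_{C_k}(0)}+(-1)^{n_{i,k}\bar n_{j,k}}\sqrt{P_{C_k}(1)}\Big].$$ *)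

theory Defs
  imports "HOL-Analysis.Analysis"
begin

definition nbit :: "nat \<Rightarrow> nat \<Rightarrow> nat" where
  "nbit i k = (i div 2 ^ k) mod 2"

definition bcompl :: "nat \<Rightarrow> nat" where
  "bcompl b = 1 - b"

definition PC :: "(nat \<Rightarrow> real) \<Rightarrow> nat \<Rightarrow> nat \<Rightarrow> real" where
  "PC p0 k b = (if b = 0 then p0 k else 1 - p0 k)"

definition Psym :: "nat \<Rightarrow> (nat \<Rightarrow> real) \<Rightarrow> nat \<Rightarrow> real" where
  "Psym m p0 i = (\<Prod>k<m. PC p0 k (nbit i k))"

definition hcoef :: "nat \<Rightarrow> nat \<Rightarrow> nat \<Rightarrow> real" where
  "hcoef m i j = (\<Prod>k<m. (-1) ^ (nbit i k * nbit j k))"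

definition gamma :: "nat \<Rightarrow> (nat \<Rightarrow> real) \<Rightarrow> nat \<Rightarrow> nat \<Rightarrow> real" where
  "gamma m p0 i j = (\<Prod>k<m.
      (-1) ^ (bcompl (nbit i k) * nbit j k) * sqrt (PC p0 k 0)
    + (-1) ^ (nbit i k * bcompl (nbit j k)) * sqrt (PC p0 k 1))"

end

theory Submission
  imports Defs
begin

text \<open>Both coefficients factor over the bits: \<open>\<gamma>\<^sub>i\<^sub>,\<^sub>j\<close> and \<open>h\<^sub>l\<^sub>,\<^sub>i\<close> are products of
  per-bit factors depending only on the \<open>k\<close>-th bits of their indices. Summing a product of
  per-bit factors over all \<open>i < 2^m\<close> gives the product of the two-term sums over each bit,
  so both identities reduce to \<open>2 \<times> 2\<close> computations with \<open>\<surd>P(0)\<close> and \<open>\<surd>P(1)\<close>, where only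
  the orthogonality needs \<open>P(0) + P(1) = 1\<close>.\<close>

lemma nbit_eq_of_bool: "nbit i k = of_bool (bit i k)"
  unfolding nbit_def bit_iff_odd by (auto simp: odd_iff_mod_2_eq_one even_iff_mod_2_eq_zero)

lemma nbit_cases: "nbit i k = 0 \<or> nbit i k = 1"
  by (simp add: nbit_eq_of_bool)

lemma nbit_xor: "nbit (xor j l) k = (if nbit j k = nbit l k then 0 else 1)"
  by (auto simp: nbit_eq_of_bool bit_xor_iff)

lemma bit_imp_less_of_less_power:
  fixes i :: nat
  assumes "i < 2 ^ m" "bit i k"
  shows "k < m"
  by (metis assms bit_take_bit_iff take_bit_nat_eq_self)

lemma nbit_eq_0_of_less_power:
  assumes "i < 2 ^ m" "m \<le> k"
  shows "nbit i k = 0"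
  using bit_imp_less_of_less_power[OF assms(1), of k] assms(2) by (auto simp: nbit_eq_of_bool)

lemma nbit_add_power:
  assumes "i < 2 ^ m"
  shows "nbit (i + 2 ^ m) k = (if k = m then 1 else nbit i k)"
proof -
  have "bit (i + 2 ^ m) k \<longleftrightarrow> bit i k \<or> k = m"
    using bit_imp_less_of_less_power[OF assms]
    by (subst bit_disjunctive_add_iff) (auto simp: bit_exp_iff)
  then show ?thesis
    using bit_imp_less_of_less_power[OF assms, of m] by (auto simp: nbit_eq_of_bool)
qed

lemma eq_iff_nbits_below_eq:
  assumes "j < 2 ^ m" "l < 2 ^ m"
  shows "j = l \<longleftrightarrow> (\<forall>k<m. nbit j k = nbit l k)"
proof
  assume "\<forall>k<m. nbit j k = nbit l k"
  then have "bit j k = bit l k" for k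
    using bit_imp_less_of_less_power[OF assms(1), of k] bit_imp_less_of_less_power[OF assms(2), of k]
    by (auto simp: nbit_eq_of_bool of_bool_eq_iff)
  then show "j = l" by (simp add: bit_eq_iff)
qed simp

lemma sum_prod_nbits:
  fixes f :: "nat \<Rightarrow> nat \<Rightarrow> 'a::comm_semiring_1"
  shows "(\<Sum>i<2 ^ m. \<Prod>k<m. f k (nbit i k)) = (\<Prod>k<m. f k 0 + f k 1)"
proof (induction m)
  case (Suc m)
  have split: "(\<Sum>i<2 ^ Suc m. F i) = (\<Sum>i<2 ^ m. F i) + (\<Sum>i<2 ^ m. F (i + 2 ^ m))"
    for F :: "nat \<Rightarrow> 'a"
    using sum.atLeastLessThan_concat[of 0 "2 ^ m" "2 ^ m + 2 ^ m" F]
      sum.shift_bounds_nat_ivl[of F 0 "2 ^ m" "2 ^ m"]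
    by (simp add: lessThan_atLeast0 mult_2)
  have "(\<Sum>i<2 ^ Suc m. \<Prod>k<Suc m. f k (nbit i k))
      = (\<Sum>i<2 ^ m. \<Prod>k<Suc m. f k (nbit i k))
      + (\<Sum>i<2 ^ m. \<Prod>k<Suc m. f k (nbit (i + 2 ^ m) k))"
    by (rule split)
  also have "\<dots> = (\<Sum>i<2 ^ m. (\<Prod>k<m. f k (nbit i k)) * f m 0)
      + (\<Sum>i<2 ^ m. (\<Prod>k<m. f k (nbit i k)) * f m 1)"
    by (intro arg_cong2[where f = "(+)"] sum.cong) (auto simp: nbit_add_power nbit_eq_0_of_less_power)
  also have "\<dots> = (\<Sum>i<2 ^ m. \<Prod>k<m. f k (nbit i k)) * (f m 0 + f m 1)"
    by (simp add: sum_distrib_right distrib_left sum.distrib)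
  finally show ?case using Suc by simp
qed simp

definition gamma_factor :: "(nat \<Rightarrow> real) \<Rightarrow> nat \<Rightarrow> nat \<Rightarrow> nat \<Rightarrow> real" where
  "gamma_factor p0 k a b =
     (-1) ^ (bcompl a * b) * sqrt (PC p0 k 0) + (-1) ^ (a * bcompl b) * sqrt (PC p0 k 1)"

lemma gamma_eq_prod_gamma_factor:
  "gamma m p0 i j = (\<Prod>k<m. gamma_factor p0 k (nbit i k) (nbit j k))"
  unfolding gamma_def gamma_factor_def ..

lemma gamma_factor_orthogonal:
  assumes "0 \<le> p0 k" "p0 k \<le> 1" "b = 0 \<or> b = 1" "c = 0 \<or> c = 1"
  shows "gamma_factor p0 k 0 c * gamma_factor p0 k 0 b + gamma_factor p0 k 1 c * gamma_factor p0 k 1 b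
    = (if b = c then 2 else 0)"
proof -
  have "sqrt (p0 k) * sqrt (p0 k) = p0 k" "sqrt (1 - p0 k) * sqrt (1 - p0 k) = 1 - p0 k"
    using assms by simp_all
  then show ?thesis
    using assms by (auto simp: gamma_factor_def bcompl_def PC_def algebra_simps)
qed

lemma hadamard_gamma_factor:
  assumes "b = 0 \<or> b = 1" "c = 0 \<or> c = 1"
  shows "gamma_factor p0 k 0 b + (-1) ^ c * gamma_factor p0 k 1 b
    = 2 * (-1) ^ (b * c) * sqrt (PC p0 k (if b = c then 0 else 1))"
  using assms by (auto simp: gamma_factor_def bcompl_def PC_def)

lemma sqrt_prod: "sqrt (prod f A) = (\<Prod>x\<in>A. sqrt (f x))"
  by (induction A rule: infinite_finite_induct) (auto simp: real_sqrt_mult)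

lemma gamma_orthogonal:
  assumes "\<And>k. k < m \<Longrightarrow> 0 \<le> p0 k \<and> p0 k \<le> 1" and "j < 2 ^ m" "l < 2 ^ m"
  shows "(\<Sum>i<2 ^ m. gamma m p0 i l * gamma m p0 i j) = (if j = l then 2 ^ m else 0)"
proof -
  have "(\<Sum>i<2 ^ m. gamma m p0 i l * gamma m p0 i j)
      = (\<Sum>i<2 ^ m. \<Prod>k<m. (\<lambda>k a. gamma_factor p0 k a (nbit l k) * gamma_factor p0 k a (nbit j k))
          k (nbit i k))"
    by (simp add: gamma_eq_prod_gamma_factor prod.distrib)
  also have "\<dots> = (\<Prod>k<m. gamma_factor p0 k 0 (nbit l k) * gamma_factor p0 k 0 (nbit j k)
      + gamma_factor p0 k 1 (nbit l k) * gamma_factor p0 k 1 (nbit j k))"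
    by (rule sum_prod_nbits)
  also have "\<dots> = (\<Prod>k<m. if nbit j k = nbit l k then 2 else 0)"
  proof (rule prod.cong[OF refl])
    fix k assume "k \<in> {..<m}"
    then show "gamma_factor p0 k 0 (nbit l k) * gamma_factor p0 k 0 (nbit j k)
        + gamma_factor p0 k 1 (nbit l k) * gamma_factor p0 k 1 (nbit j k)
      = (if nbit j k = nbit l k then 2 else 0)"
      using assms(1)[of k] gamma_factor_orthogonal[OF _ _ nbit_cases nbit_cases, of p0 k l k j k]
      by simp
  qed
  also have "\<dots> = (if j = l then 2 ^ m else 0)"
    using eq_iff_nbits_below_eq[OF assms(2,3)] by auto
  finally show ?thesis .
qed

lemma hadamard_gamma_sum:
  "(\<Sum>i<2 ^ m. hcoef m l i * gamma m p0 i j) = 2 ^ m * hcoef m j l * sqrt (Psym m p0 (xor j l))"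
proof -
  have "(\<Sum>i<2 ^ m. hcoef m l i * gamma m p0 i j)
      = (\<Sum>i<2 ^ m. \<Prod>k<m. (\<lambda>k a. (-1) ^ (nbit l k * a) * gamma_factor p0 k a (nbit j k))
          k (nbit i k))"
    by (simp add: gamma_eq_prod_gamma_factor hcoef_def prod.distrib)
  also have "\<dots> = (\<Prod>k<m. gamma_factor p0 k 0 (nbit j k) + (-1) ^ nbit l k * gamma_factor p0 k 1 (nbit j k))"
    by (subst sum_prod_nbits) simp
  also have "\<dots> = (\<Prod>k<m. 2 * (-1) ^ (nbit j k * nbit l k) * sqrt (PC p0 k (nbit (xor j l) k)))"
    unfolding nbit_xor using hadamard_gamma_factor[OF nbit_cases nbit_cases]
    by (intro prod.cong refl) presburger
  also have "\<dots> = 2 ^ m * hcoef m j l * sqrt (Psym m p0 (xor j l))"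
    by (simp add: prod.distrib hcoef_def Psym_def sqrt_prod)
  finally show ?thesis .
qed

theorem lemma1:
  fixes m :: nat and p0 :: "nat \<Rightarrow> real" and j l :: nat
  assumes "m \<ge> 1"
    and "\<And>k. k < m \<Longrightarrow> 0 < p0 k \<and> p0 k < 1"
    and "j < 2 ^ m" and "l < 2 ^ m"
  shows "(\<Sum>i<2 ^ m. gamma m p0 i l * gamma m p0 i j) = (if j = l then 2 ^ m else 0)
    \<and> (\<Sum>i<2 ^ m. hcoef m l i * gamma m p0 i j)
        = 2 ^ m * hcoef m j l * sqrt (Psym m p0 (xor j l))"
  using gamma_orthogonal[of m p0 j l] hadamard_gamma_sum assms(2-4) by force

end
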